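(* Let $K$ be a field, $A$ a cocommutative Hopf algebra over $K$ with antipode $S$, and $X,Y$ normal Hopf subalgebras of $A$. Let $[X,Y]$ be the subalgebra of $A$ generated by all elements $\{a,b\}=a_1b_1S(a_2)S(b_2)$ with $a\in X$, $b\in Y$. Then $[X,Y]$ is a normal Hopf subalgebra of $A$.
   Context: Sweedler notation $\Delta(a)=a_1\otimes a_2$. A Hopf subalgebra $D$ of $A$ is normal if $a_1dS(a_2)\in D$ for all $a\in A$, $d\in D$. *)

theory Defs
  imports Main "HOL.Vector_Spaces"
begin

text \<open>
  Hopf algebras over a field K, encoded without a tensor-product type.  An element of A (x) A is represented by a formal finite sum
  sum_i u_i (x) v_i, i.e. a list of pairs; two formal sums denote the same tensor iff
  every K-bilinear form A x A -> K takes the same value on them (over a field, A (x) A is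
  separated by (A (x) A)^* = Bil(A x A, K)).  Similarly for A (x) A (x) A with trilinear
  forms.  The comultiplication is given as a function returning a formal sum
  Delta(a) = sum a_1 (x) a_2 (Sweedler notation).
\<close>

definition tsum :: "('a \<Rightarrow> 'b \<Rightarrow> 'c::ab_group_add) \<Rightarrow> ('a \<times> 'b) list \<Rightarrow> 'c" where
  "tsum f t = (\<Sum>(x, y)\<leftarrow>t. f x y)"

definition k_bilinear :: "('k::field \<Rightarrow> 'a::ab_group_add \<Rightarrow> 'a) \<Rightarrow> ('a \<Rightarrow> 'a \<Rightarrow> 'k) \<Rightarrow> bool" where
  "k_bilinear scale f \<longleftrightarrow>
     (\<forall>x. Vector_Spaces.linear scale (*) (f x)) \<and>
     (\<forall>y. Vector_Spaces.linear scale (*) (\<lambda>x. f x y))"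

definition k_trilinear :: "('k::field \<Rightarrow> 'a::ab_group_add \<Rightarrow> 'a) \<Rightarrow> ('a \<Rightarrow> 'a \<Rightarrow> 'a \<Rightarrow> 'k) \<Rightarrow> bool" where
  "k_trilinear scale g \<longleftrightarrow>
     (\<forall>x y. Vector_Spaces.linear scale (*) (g x y)) \<and>
     (\<forall>x z. Vector_Spaces.linear scale (*) (\<lambda>y. g x y z)) \<and>
     (\<forall>y z. Vector_Spaces.linear scale (*) (\<lambda>x. g x y z))"

definition teq :: "('k::field \<Rightarrow> 'a::ab_group_add \<Rightarrow> 'a) \<Rightarrow> ('a \<times> 'a) list \<Rightarrow> ('a \<times> 'a) list \<Rightarrow> bool" where
  "teq scale s t \<longleftrightarrow> (\<forall>f. k_bilinear scale f \<longrightarrow> tsum f s = tsum f t)"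

definition k_algebra :: "('k::field \<Rightarrow> 'a::ring_1 \<Rightarrow> 'a) \<Rightarrow> bool" where
  "k_algebra scale \<longleftrightarrow> vector_space scale \<and>
     (\<forall>c x y. scale c (x * y) = scale c x * y \<and> scale c (x * y) = x * scale c y)"

definition hopf_algebra ::
  "('k::field \<Rightarrow> 'a::ring_1 \<Rightarrow> 'a) \<Rightarrow> ('a \<Rightarrow> ('a \<times> 'a) list) \<Rightarrow> ('a \<Rightarrow> 'k) \<Rightarrow> ('a \<Rightarrow> 'a) \<Rightarrow> bool" where
  "hopf_algebra scale \<Delta> \<epsilon> S \<longleftrightarrow>
     k_algebra scale \<and>
     \<comment> \<open>Delta and epsilon are linear\<close>
     (\<forall>x y. teq scale (\<Delta> (x + y)) (\<Delta> x @ \<Delta> y)) \<and>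
     (\<forall>c x. teq scale (\<Delta> (scale c x)) (map (\<lambda>(u, v). (scale c u, v)) (\<Delta> x))) \<and>
     Vector_Spaces.linear scale (*) \<epsilon> \<and>
     \<comment> \<open>coassociativity\<close>
     (\<forall>x g. k_trilinear scale g \<longrightarrow>
        tsum (\<lambda>u v. tsum (\<lambda>p q. g p q v) (\<Delta> u)) (\<Delta> x) =
        tsum (\<lambda>u v. tsum (\<lambda>p q. g u p q) (\<Delta> v)) (\<Delta> x)) \<and>
     \<comment> \<open>counit\<close>
     (\<forall>x. tsum (\<lambda>u v. scale (\<epsilon> u) v) (\<Delta> x) = x \<and> tsum (\<lambda>u v. scale (\<epsilon> v) u) (\<Delta> x) = x) \<and>
     \<comment> \<open>Delta and epsilon are unital algebra maps\<close>
     (\<forall>x y. teq scale (\<Delta> (x * y))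
        (concat (map (\<lambda>(u, v). map (\<lambda>(p, q). (u * p, v * q)) (\<Delta> y)) (\<Delta> x)))) \<and>
     teq scale (\<Delta> 1) [(1, 1)] \<and>
     (\<forall>x y. \<epsilon> (x * y) = \<epsilon> x * \<epsilon> y) \<and> \<epsilon> 1 = 1 \<and>
     \<comment> \<open>antipode\<close>
     Vector_Spaces.linear scale scale S \<and>
     (\<forall>x. tsum (\<lambda>u v. u * S v) (\<Delta> x) = scale (\<epsilon> x) 1 \<and>
          tsum (\<lambda>u v. S u * v) (\<Delta> x) = scale (\<epsilon> x) 1)"

definition cocommutative :: "('k::field \<Rightarrow> 'a::ring_1 \<Rightarrow> 'a) \<Rightarrow> ('a \<Rightarrow> ('a \<times> 'a) list) \<Rightarrow> bool" where
  "cocommutative scale \<Delta> \<longleftrightarrow> (\<forall>x. teq scale (\<Delta> x) (map prod.swap (\<Delta> x)))"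

definition subalgebra :: "('k::field \<Rightarrow> 'a::ring_1 \<Rightarrow> 'a) \<Rightarrow> 'a set \<Rightarrow> bool" where
  "subalgebra scale B \<longleftrightarrow> 1 \<in> B \<and> (\<forall>x\<in>B. \<forall>y\<in>B. x + y \<in> B \<and> x * y \<in> B) \<and>
     (\<forall>c. \<forall>x\<in>B. scale c x \<in> B)"

definition hopf_subalgebra ::
  "('k::field \<Rightarrow> 'a::ring_1 \<Rightarrow> 'a) \<Rightarrow> ('a \<Rightarrow> ('a \<times> 'a) list) \<Rightarrow> ('a \<Rightarrow> 'a) \<Rightarrow> 'a set \<Rightarrow> bool" where
  "hopf_subalgebra scale \<Delta> S D \<longleftrightarrow> subalgebra scale D \<and>
     (\<forall>d\<in>D. \<exists>t. set t \<subseteq> D \<times> D \<and> teq scale (\<Delta> d) t) \<and> S ` D \<subseteq> D"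

definition normal_hopf_subalgebra ::
  "('k::field \<Rightarrow> 'a::ring_1 \<Rightarrow> 'a) \<Rightarrow> ('a \<Rightarrow> ('a \<times> 'a) list) \<Rightarrow> ('a \<Rightarrow> 'a) \<Rightarrow> 'a set \<Rightarrow> bool" where
  "normal_hopf_subalgebra scale \<Delta> S D \<longleftrightarrow> hopf_subalgebra scale \<Delta> S D \<and>
     (\<forall>a d. d \<in> D \<longrightarrow> tsum (\<lambda>u v. u * d * S v) (\<Delta> a) \<in> D)"

definition hopf_bracket :: "('a \<Rightarrow> ('a \<times> 'a) list) \<Rightarrow> ('a \<Rightarrow> 'a) \<Rightarrow> 'a \<Rightarrow> 'a \<Rightarrow> 'a::ring_1" where
  "hopf_bracket \<Delta> S a b = tsum (\<lambda>u v. tsum (\<lambda>p q. u * p * S v * S q) (\<Delta> b)) (\<Delta> a)"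

definition generated_subalgebra :: "('k::field \<Rightarrow> 'a::ring_1 \<Rightarrow> 'a) \<Rightarrow> 'a set \<Rightarrow> 'a set" where
  "generated_subalgebra scale G = \<Inter>{B. subalgebra scale B \<and> G \<subseteq> B}"

definition hopf_commutator ::
  "('k::field \<Rightarrow> 'a::ring_1 \<Rightarrow> 'a) \<Rightarrow> ('a \<Rightarrow> ('a \<times> 'a) list) \<Rightarrow> ('a \<Rightarrow> 'a) \<Rightarrow> 'a set \<Rightarrow> 'a set \<Rightarrow> 'a set" where
  "hopf_commutator scale \<Delta> S X Y =
     generated_subalgebra scale {hopf_bracket \<Delta> S a b | a b. a \<in> X \<and> b \<in> Y}"

end

theory Submission
  imports Defs
begin

text \<open>
  Elements of \<open>A \<otimes> A\<close> are only accessible through bilinear maps, so the argument runs on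
  Sweedler sums \<open>\<Sum> F(x\<^sub>1, x\<^sub>2)\<close> for bilinear \<open>F\<close> into an arbitrary vector space; these respect
  the tensor identities of the axioms because \<open>K\<close>-valued functionals separate points.
  Cocommutativity makes iterated Sweedler sums invariant under permutation of the factors.
  This gives \<open>S\<^sup>2 = id\<close>, \<open>\<Delta>(S x) = S x\<^sub>1 \<otimes> S x\<^sub>2\<close> and, with the adjoint action
  \<open>ad c d = c\<^sub>1 d S(c\<^sub>2)\<close>,
  \<open>\<Delta>{a, b} = {a\<^sub>1, b\<^sub>1} \<otimes> {a\<^sub>2, b\<^sub>2}\<close>, \<open>ad c {a, b} = {ad c\<^sub>1 a, ad c\<^sub>2 b}\<close> and
  \<open>S{a, b} = {b, a} = ad b\<^sub>1 {a, S b\<^sub>2}\<close>.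
  In a subalgebra \<open>C\<close>, the elements \<open>d\<close> with \<open>\<Delta> d \<in> C \<otimes> C\<close>, those with \<open>S d \<in> C\<close>, and those
  with \<open>ad c d \<in> C\<close> for all \<open>c\<close> form subalgebras. For \<open>C = [X, Y]\<close> the identities above and
  the normality of \<open>X\<close> and \<open>Y\<close> put every generator \<open>{a, b}\<close> into each of them.
\<close>

lemma tsum_Nil [simp]: "tsum f [] = 0"
  by (simp add: tsum_def)

lemma tsum_Cons [simp]: "tsum f (p # t) = f (fst p) (snd p) + tsum f t"
  by (cases p) (simp add: tsum_def)

lemma tsum_append [simp]: "tsum f (s @ t) = tsum f s + tsum f t"
  by (induction s) (auto simp: algebra_simps)

lemma tsum_add: "tsum (\<lambda>u v. f u v + g u v) t = tsum f t + tsum g t"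
  by (induction t) (auto simp: algebra_simps)

lemma tsum_zero [simp]: "tsum (\<lambda>u v. 0) t = 0"
  by (induction t) auto

lemma tsum_map: "tsum f (map h t) = tsum (\<lambda>u v. f (fst (h (u, v))) (snd (h (u, v)))) t"
  by (induction t) auto

lemma tsum_concat: "tsum f (concat (map h t)) = tsum (\<lambda>u v. tsum f (h (u, v))) t"
  by (induction t) auto

lemma tsum_swap: "tsum (\<lambda>u v. tsum (F u v) t2) t1 = tsum (\<lambda>p q. tsum (\<lambda>u v. F u v p q) t1) t2"
  by (induction t1) (simp_all add: tsum_add)

lemma tsum_additive:
  assumes "\<And>a b. f (a + b) = f a + f b"
  shows "f (tsum F t) = tsum (\<lambda>u v. f (F u v)) t"
proof -
  have "f 0 = 0" using assms[of 0 0] by simp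
  with assms show ?thesis by (induction t) auto
qed

lemma vector_space_field_self: "vector_space ((*) :: 'k::field \<Rightarrow> 'k \<Rightarrow> 'k)"
  by unfold_locales (auto simp: algebra_simps)

lemma functionals_separate_points:
  fixes sv :: "'k::field \<Rightarrow> 'v::ab_group_add \<Rightarrow> 'v"
  assumes "vector_space sv" and "\<And>\<phi>. Vector_Spaces.linear sv (*) \<phi> \<Longrightarrow> \<phi> z = 0"
  shows "z = 0"
proof (rule ccontr)
  assume "z \<noteq> 0"
  interpret vector_space_pair sv "(*) :: 'k \<Rightarrow> 'k \<Rightarrow> 'k"
    using assms(1) vector_space_field_self by (simp add: vector_space_pair_def)
  from \<open>z \<noteq> 0\<close> have "vs1.independent {z}" by simp
  from linear_independent_extend[OF this, of "\<lambda>_. 1"]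
  obtain \<phi> where "Vector_Spaces.linear sv (*) \<phi>" "\<phi> z = 1" by auto
  with assms(2) show False by force
qed

lemma subalgebra_generated_subalgebra: "subalgebra scale (generated_subalgebra scale G)"
  unfolding subalgebra_def generated_subalgebra_def by auto

lemma generated_subalgebra_superset: "g \<in> G \<Longrightarrow> g \<in> generated_subalgebra scale G"
  unfolding generated_subalgebra_def by auto

lemma hopf_commutator_induct:
  assumes "d \<in> hopf_commutator scale \<Delta> S X Y"
    and "subalgebra scale {d \<in> hopf_commutator scale \<Delta> S X Y. P d}"
    and "\<And>a b. a \<in> X \<Longrightarrow> b \<in> Y \<Longrightarrow> P (hopf_bracket \<Delta> S a b)"
  shows "P d"
  using assms unfolding hopf_commutator_def generated_subalgebra_def by blast

section \<open>Sweedler sums\<close>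

locale hopf_alg =
  fixes scale :: "'k::field \<Rightarrow> 'a::ring_1 \<Rightarrow> 'a"
    and \<Delta> :: "'a \<Rightarrow> ('a \<times> 'a) list"
    and \<epsilon> :: "'a \<Rightarrow> 'k"
    and S :: "'a \<Rightarrow> 'a"
  assumes hopf_algebra: "hopf_algebra scale \<Delta> \<epsilon> S"
begin

text \<open>Only meaningful for bilinear \<open>F\<close>: the list \<open>\<Delta> x\<close> is just one representative of the tensor.\<close>
abbreviation sweedler :: "'a \<Rightarrow> ('a \<Rightarrow> 'a \<Rightarrow> 'v::ab_group_add) \<Rightarrow> 'v" where
  "sweedler x F \<equiv> tsum F (\<Delta> x)"

lemma vector_space_scale: "vector_space scale"
  and scale_mult_left: "scale c x * y = scale c (x * y)"
  and scale_mult_right: "x * scale c y = scale c (x * y)"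
  using hopf_algebra unfolding hopf_algebra_def k_algebra_def by metis+

lemma teq_Delta_add: "teq scale (\<Delta> (x + y)) (\<Delta> x @ \<Delta> y)"
  and teq_Delta_scale: "teq scale (\<Delta> (scale c x)) (map (\<lambda>(u, v). (scale c u, v)) (\<Delta> x))"
  and teq_Delta_mult: "teq scale (\<Delta> (x * y))
        (concat (map (\<lambda>(u, v). map (\<lambda>(p, q). (u * p, v * q)) (\<Delta> y)) (\<Delta> x)))"
  and teq_Delta_one: "teq scale (\<Delta> 1) [(1, 1)]"
  and coassoc_forms: "k_trilinear scale g \<Longrightarrow>
        sweedler x (\<lambda>u v. sweedler u (\<lambda>p q. g p q v)) = sweedler x (\<lambda>u v. sweedler v (\<lambda>p q. g u p q))"
  and counit_left: "sweedler x (\<lambda>u v. scale (\<epsilon> u) v) = x"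
  and counit_right: "sweedler x (\<lambda>u v. scale (\<epsilon> v) u) = x"
  and counit_mult: "\<epsilon> (x * y) = \<epsilon> x * \<epsilon> y"
  and counit_one: "\<epsilon> 1 = 1"
  and antipode_right: "sweedler x (\<lambda>u v. u * S v) = scale (\<epsilon> x) 1"
  and antipode_left: "sweedler x (\<lambda>u v. S u * v) = scale (\<epsilon> x) 1"
  using hopf_algebra unfolding hopf_algebra_def by simp_all

lemma counit_add: "\<epsilon> (x + y) = \<epsilon> x + \<epsilon> y"
  and counit_scale: "\<epsilon> (scale c x) = c * \<epsilon> x"
  and antipode_add: "S (x + y) = S x + S y"
  and antipode_scale: "S (scale c x) = scale c (S x)"
  using hopf_algebra unfolding hopf_algebra_def linear_iff by simp_all

definition linear_into :: "('k \<Rightarrow> 'v::ab_group_add \<Rightarrow> 'v) \<Rightarrow> ('a \<Rightarrow> 'v) \<Rightarrow> bool" where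
  "linear_into sv f \<longleftrightarrow> (\<forall>x y. f (x + y) = f x + f y) \<and> (\<forall>c x. f (scale c x) = sv c (f x))"

definition bilinear_into :: "('k \<Rightarrow> 'v::ab_group_add \<Rightarrow> 'v) \<Rightarrow> ('a \<Rightarrow> 'a \<Rightarrow> 'v) \<Rightarrow> bool" where
  "bilinear_into sv F \<longleftrightarrow> (\<forall>x. linear_into sv (F x)) \<and> (\<forall>y. linear_into sv (\<lambda>x. F x y))"

definition trilinear_into :: "('k \<Rightarrow> 'v::ab_group_add \<Rightarrow> 'v) \<Rightarrow> ('a \<Rightarrow> 'a \<Rightarrow> 'a \<Rightarrow> 'v) \<Rightarrow> bool" where
  "trilinear_into sv G \<longleftrightarrow> (\<forall>x y. linear_into sv (G x y)) \<and> (\<forall>x z. linear_into sv (\<lambda>y. G x y z)) \<and>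
     (\<forall>y z. linear_into sv (\<lambda>x. G x y z))"

definition quadrilinear_into ::
  "('k \<Rightarrow> 'v::ab_group_add \<Rightarrow> 'v) \<Rightarrow> ('a \<Rightarrow> 'a \<Rightarrow> 'a \<Rightarrow> 'a \<Rightarrow> 'v) \<Rightarrow> bool" where
  "quadrilinear_into sv H \<longleftrightarrow> (\<forall>x y z. linear_into sv (H x y z)) \<and>
     (\<forall>x y w. linear_into sv (\<lambda>z. H x y z w)) \<and> (\<forall>x z w. linear_into sv (\<lambda>y. H x y z w)) \<and>
     (\<forall>y z w. linear_into sv (\<lambda>x. H x y z w))"

lemma linear_into_add: "linear_into sv f \<Longrightarrow> f (x + y) = f x + f y"
  and linear_into_scale: "linear_into sv f \<Longrightarrow> f (scale c x) = sv c (f x)"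
  by (simp_all add: linear_into_def)

lemma linear_into_iff_linear: "vector_space sv \<Longrightarrow> linear_into sv f \<longleftrightarrow> Vector_Spaces.linear scale sv f"
  using vector_space_scale by (simp add: linear_into_def linear_iff)

lemma teq_tsum_bilinear:
  fixes sv :: "'k \<Rightarrow> 'v::ab_group_add \<Rightarrow> 'v"
  assumes vs: "vector_space sv" and st: "teq scale s t" and F: "bilinear_into sv F"
  shows "tsum F s = tsum F t"
proof -
  have "tsum F s - tsum F t = 0"
  proof (rule functionals_separate_points[OF vs])
    fix \<phi> :: "'v \<Rightarrow> 'k" assume "Vector_Spaces.linear sv (*) \<phi>"
    then have add: "\<And>a b. \<phi> (a + b) = \<phi> a + \<phi> b" and scale: "\<And>c a. \<phi> (sv c a) = c * \<phi> a"
      by (auto simp: linear_iff)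
    have "k_bilinear scale (\<lambda>u v. \<phi> (F u v))"
      using F vector_space_field_self vector_space_scale
      unfolding k_bilinear_def bilinear_into_def linear_into_def linear_iff by (simp add: add scale)
    with st have "\<phi> (tsum F s) = \<phi> (tsum F t)"
      by (simp add: teq_def tsum_additive[of \<phi>, OF add])
    then show "\<phi> (tsum F s - tsum F t) = 0"
      using add[of "tsum F s - tsum F t" "tsum F t"] by simp
  qed
  then show ?thesis by simp
qed

lemma teq_iff_bilinear_into: "teq scale s t \<longleftrightarrow> (\<forall>f. bilinear_into (*) f \<longrightarrow> tsum f s = tsum f t)"
  unfolding teq_def k_bilinear_def bilinear_into_def
  using linear_into_iff_linear[OF vector_space_field_self] by simp

lemma scale_sweedler: "vector_space sv \<Longrightarrow> sv c (sweedler x G) = sweedler x (\<lambda>u v. sv c (G u v))"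
  by (rule tsum_additive) (simp add: vector_space.vector_space_assms(1))

lemma sweedler_distrib_right: "sweedler x G * (z::'a) = sweedler x (\<lambda>u v. G u v * z)"
  by (rule tsum_additive[where f="\<lambda>m. m * z"]) (simp add: distrib_right)

lemma sweedler_distrib_left: "(z::'a) * sweedler x G = sweedler x (\<lambda>u v. z * G u v)"
  by (rule tsum_additive[where f="\<lambda>m. z * m"]) (simp add: distrib_left)

lemma antipode_sweedler: "S (sweedler x G) = sweedler x (\<lambda>u v. S (G u v))"
  by (rule tsum_additive) (rule antipode_add)

lemma bilinear_into_sweedler1: "bilinear_into sv F \<Longrightarrow> F (sweedler x G) y = sweedler x (\<lambda>u v. F (G u v) y)"
  and bilinear_into_sweedler2: "bilinear_into sv F \<Longrightarrow> F y (sweedler x G) = sweedler x (\<lambda>u v. F y (G u v))"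
  by (rule tsum_additive, simp add: bilinear_into_def linear_into_def)+

lemma sweedler_add:
  assumes "vector_space sv" "bilinear_into sv F"
  shows "sweedler (x + y) F = sweedler x F + sweedler y F"
  using teq_tsum_bilinear[OF assms(1) teq_Delta_add assms(2)] by simp

lemma sweedler_scale:
  assumes vs: "vector_space sv" and F: "bilinear_into sv F"
  shows "sweedler (scale c x) F = sv c (sweedler x F)"
proof -
  have "sweedler (scale c x) F = tsum F (map (\<lambda>(u, v). (scale c u, v)) (\<Delta> x))"
    using teq_tsum_bilinear[OF vs teq_Delta_scale F] .
  also have "\<dots> = sweedler x (\<lambda>u v. sv c (F u v))"
    using F by (simp add: tsum_map bilinear_into_def linear_into_def)
  finally show ?thesis by (simp add: scale_sweedler[OF vs])
qed

lemma sweedler_sweedler: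
  assumes "vector_space sv" "bilinear_into sv F"
  shows "sweedler (sweedler x G) F = sweedler x (\<lambda>u v. sweedler (G u v) F)"
  by (rule tsum_additive) (rule sweedler_add[OF assms])

lemma sweedler_mult:
  assumes "vector_space sv" "bilinear_into sv F"
  shows "sweedler (x * y) F = sweedler x (\<lambda>u v. sweedler y (\<lambda>p q. F (u * p) (v * q)))"
  using teq_tsum_bilinear[OF assms(1) teq_Delta_mult assms(2)]
  by (simp add: tsum_concat tsum_map case_prod_beta)

lemma sweedler_one:
  assumes "vector_space sv" "bilinear_into sv F"
  shows "sweedler 1 F = F 1 1"
  using teq_tsum_bilinear[OF assms(1) teq_Delta_one assms(2)] by simp

lemma sweedler_coassoc:
  fixes G :: "'a \<Rightarrow> 'a \<Rightarrow> 'a \<Rightarrow> 'v::ab_group_add"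
  assumes vs: "vector_space sv" and G: "trilinear_into sv G"
  shows "sweedler x (\<lambda>u v. sweedler u (\<lambda>p q. G p q v)) = sweedler x (\<lambda>u v. sweedler v (\<lambda>p q. G u p q))"
    (is "?L = ?R")
proof -
  have "?L - ?R = 0"
  proof (rule functionals_separate_points[OF vs])
    fix \<phi> :: "'v \<Rightarrow> 'k" assume "Vector_Spaces.linear sv (*) \<phi>"
    then have add: "\<And>a b. \<phi> (a + b) = \<phi> a + \<phi> b" and scale: "\<And>c a. \<phi> (sv c a) = c * \<phi> a"
      by (auto simp: linear_iff)
    have "k_trilinear scale (\<lambda>u v w. \<phi> (G u v w))"
      using G vector_space_field_self vector_space_scale
      unfolding k_trilinear_def trilinear_into_def linear_into_def linear_iff by (simp add: add scale)
    from coassoc_forms[OF this, of x] have "\<phi> ?L = \<phi> ?R"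
      by (simp add: tsum_additive[of \<phi>, OF add])
    then show "\<phi> (?L - ?R) = 0"
      using add[of "?L - ?R" ?R] by simp
  qed
  then show ?thesis by simp
qed

lemma sweedler_counit_left: "linear_into sv f \<Longrightarrow> sweedler x (\<lambda>u v. sv (\<epsilon> u) (f v)) = f x"
  using tsum_additive[of f "\<lambda>u v. scale (\<epsilon> u) v" "\<Delta> x"] counit_left[of x]
  by (simp add: linear_into_def)

lemma sweedler_counit_right: "linear_into sv f \<Longrightarrow> sweedler x (\<lambda>u v. sv (\<epsilon> v) (f u)) = f x"
  using tsum_additive[of f "\<lambda>u v. scale (\<epsilon> v) u" "\<Delta> x"] counit_right[of x]
  by (simp add: linear_into_def)

lemma sweedler_antipode_right: "linear_into sv f \<Longrightarrow> sweedler x (\<lambda>a b. f (a * S b)) = sv (\<epsilon> x) (f 1)"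
  using tsum_additive[of f "\<lambda>a b. a * S b" "\<Delta> x"] antipode_right[of x]
  by (simp add: linear_into_def)

lemma sweedler_antipode_left: "linear_into sv f \<Longrightarrow> sweedler x (\<lambda>a b. f (S a * b)) = sv (\<epsilon> x) (f 1)"
  using tsum_additive[of f "\<lambda>a b. S a * b" "\<Delta> x"] antipode_left[of x]
  by (simp add: linear_into_def)

lemma linear_into_id: "linear_into scale (\<lambda>x. x)"
  by (simp add: linear_into_def)

lemma linear_into_mult_left: "linear_into scale f \<Longrightarrow> linear_into scale (\<lambda>x. a * f x)"
  by (simp add: linear_into_def distrib_left scale_mult_right)

lemma linear_into_mult_right: "linear_into scale f \<Longrightarrow> linear_into scale (\<lambda>x. f x * a)"
  by (simp add: linear_into_def distrib_right scale_mult_left)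

lemma linear_into_antipode: "linear_into scale f \<Longrightarrow> linear_into scale (\<lambda>x. S (f x))"
  by (simp add: linear_into_def antipode_add antipode_scale)

lemma linear_into_counit: "vector_space sv \<Longrightarrow> linear_into sv (\<lambda>x. sv (\<epsilon> x) z)"
  by (simp add: linear_into_def counit_add counit_scale vector_space.vector_space_assms(2,3))

lemma linear_into_sweedler_arg:
  assumes "vector_space sv" "bilinear_into sv F" "linear_into scale f"
  shows "linear_into sv (\<lambda>x. sweedler (f x) F)"
  using assms sweedler_add[OF assms(1,2)] sweedler_scale[OF assms(1,2)]
  by (simp add: linear_into_def)

lemma linear_into_sweedler_param:
  assumes vs: "vector_space sv" and F: "\<And>u v. linear_into sv (\<lambda>y. F y u v)"
  shows "linear_into sv (\<lambda>y. sweedler x (F y))"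
proof -
  have "F (a + b) = (\<lambda>u v. F a u v + F b u v)" "F (scale c a) = (\<lambda>u v. sv c (F a u v))" for a b c
    using F by (simp_all add: linear_into_def fun_eq_iff)
  then show ?thesis by (simp add: linear_into_def tsum_add scale_sweedler[OF vs])
qed

lemma bilinear_into_compose:
    "bilinear_into sv F \<Longrightarrow> linear_into scale f \<Longrightarrow> linear_into sv (\<lambda>x. F (f x) c)"
    "bilinear_into sv F \<Longrightarrow> linear_into scale f \<Longrightarrow> linear_into sv (\<lambda>x. F c (f x))"
  by (simp_all add: linear_into_def bilinear_into_def)

lemma trilinear_into_compose:
    "trilinear_into sv F \<Longrightarrow> linear_into scale f \<Longrightarrow> linear_into sv (\<lambda>x. F (f x) b c)"
    "trilinear_into sv F \<Longrightarrow> linear_into scale f \<Longrightarrow> linear_into sv (\<lambda>x. F a (f x) c)"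
    "trilinear_into sv F \<Longrightarrow> linear_into scale f \<Longrightarrow> linear_into sv (\<lambda>x. F a b (f x))"
  by (simp_all add: linear_into_def trilinear_into_def)

lemma quadrilinear_into_compose:
    "quadrilinear_into sv F \<Longrightarrow> linear_into scale f \<Longrightarrow> linear_into sv (\<lambda>x. F (f x) b c d)"
    "quadrilinear_into sv F \<Longrightarrow> linear_into scale f \<Longrightarrow> linear_into sv (\<lambda>x. F a (f x) c d)"
    "quadrilinear_into sv F \<Longrightarrow> linear_into scale f \<Longrightarrow> linear_into sv (\<lambda>x. F a b (f x) d)"
    "quadrilinear_into sv F \<Longrightarrow> linear_into scale f \<Longrightarrow> linear_into sv (\<lambda>x. F a b c (f x))"
  by (simp_all add: linear_into_def quadrilinear_into_def)

lemma bilinear_intoI: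
  "(\<And>x. linear_into sv (F x)) \<Longrightarrow> (\<And>y. linear_into sv (\<lambda>x. F x y)) \<Longrightarrow> bilinear_into sv F"
  by (simp add: bilinear_into_def)

lemma trilinear_intoI:
  "(\<And>x y. linear_into sv (G x y)) \<Longrightarrow> (\<And>x z. linear_into sv (\<lambda>y. G x y z)) \<Longrightarrow>
   (\<And>y z. linear_into sv (\<lambda>x. G x y z)) \<Longrightarrow> trilinear_into sv G"
  by (simp add: trilinear_into_def)

lemma quadrilinear_intoI:
  "(\<And>x y z. linear_into sv (H x y z)) \<Longrightarrow> (\<And>x y w. linear_into sv (\<lambda>z. H x y z w)) \<Longrightarrow>
   (\<And>x z w. linear_into sv (\<lambda>y. H x y z w)) \<Longrightarrow> (\<And>y z w. linear_into sv (\<lambda>x. H x y z w)) \<Longrightarrow>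
   quadrilinear_into sv H"
  by (simp add: quadrilinear_into_def)

lemmas linear_into_intros =
  linear_into_id linear_into_mult_left linear_into_mult_right linear_into_antipode
  linear_into_sweedler_param linear_into_sweedler_arg bilinear_intoI vector_space_scale
  vector_space_field_self

section \<open>Coassociativity and the antipode\<close>

definition sweedler3 :: "'a \<Rightarrow> ('a \<Rightarrow> 'a \<Rightarrow> 'a \<Rightarrow> 'v::ab_group_add) \<Rightarrow> 'v" where
  "sweedler3 x G = sweedler x (\<lambda>u v. sweedler u (\<lambda>p q. G p q v))"

definition sweedler4 :: "'a \<Rightarrow> ('a \<Rightarrow> 'a \<Rightarrow> 'a \<Rightarrow> 'a \<Rightarrow> 'v::ab_group_add) \<Rightarrow> 'v" where
  "sweedler4 x H = sweedler x (\<lambda>u v. sweedler u (\<lambda>a b. sweedler v (\<lambda>c d. H a b c d)))"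

lemma sweedler3_coassoc:
  assumes "vector_space sv" "trilinear_into sv G"
  shows "sweedler3 x G = sweedler x (\<lambda>u v. sweedler v (\<lambda>p q. G u p q))"
  unfolding sweedler3_def by (rule sweedler_coassoc[OF assms])

lemma sweedler4_group34: "sweedler4 x H = sweedler3 x (\<lambda>a b w. sweedler w (\<lambda>c d. H a b c d))"
  unfolding sweedler3_def sweedler4_def ..

lemma sweedler4_group12:
  assumes vs: "vector_space sv" and H: "quadrilinear_into sv H"
  shows "sweedler4 x H = sweedler3 x (\<lambda>w c d. sweedler w (\<lambda>a b. H a b c d))"
proof -
  have "trilinear_into sv (\<lambda>w c d. sweedler w (\<lambda>a b. H a b c d))"
    by (insert vs, intro trilinear_intoI;
        (rule linear_into_intros quadrilinear_into_compose[OF H] | assumption)+)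
  then have "sweedler3 x (\<lambda>w c d. sweedler w (\<lambda>a b. H a b c d))
      = sweedler x (\<lambda>w v. sweedler v (\<lambda>c d. sweedler w (\<lambda>a b. H a b c d)))"
    by (rule sweedler3_coassoc[OF vs])
  also have "\<dots> = sweedler4 x H"
    unfolding sweedler4_def by (subst tsum_swap) (rule refl)
  finally show ?thesis ..
qed

lemma sweedler4_group234:
  assumes vs: "vector_space sv" and H: "quadrilinear_into sv H"
  shows "sweedler4 x H = sweedler x (\<lambda>a v. sweedler3 v (\<lambda>b c d. H a b c d))"
proof -
  have "trilinear_into sv (\<lambda>b c d. H a b c d)" for a
    using H by (simp add: trilinear_into_def quadrilinear_into_def)
  moreover have "trilinear_into sv (\<lambda>a b w. sweedler w (\<lambda>c d. H a b c d))"
    by (insert vs, intro trilinear_intoI;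
        (rule linear_into_intros quadrilinear_into_compose[OF H] | assumption)+)
  ultimately show ?thesis
    by (simp add: sweedler3_coassoc[OF vs] sweedler4_group34)
qed

lemma sweedler4_group23:
  assumes vs: "vector_space sv" and H: "quadrilinear_into sv H"
  shows "sweedler4 x H = sweedler3 x (\<lambda>a w d. sweedler w (\<lambda>b c. H a b c d))"
proof -
  have "trilinear_into sv (\<lambda>a w d. sweedler w (\<lambda>b c. H a b c d))"
    by (insert vs, intro trilinear_intoI;
        (rule linear_into_intros quadrilinear_into_compose[OF H] | assumption)+)
  from sweedler3_coassoc[OF vs this] show ?thesis
    unfolding sweedler4_group234[OF vs H] sweedler3_def by simp
qed

lemma sweedler3_contract23_right:
  assumes vs: "vector_space sv" and f: "bilinear_into sv f"
  shows "sweedler3 x (\<lambda>a b c. f a (b * S c)) = f x 1"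
proof -
  have "trilinear_into sv (\<lambda>a b c. f a (b * S c))"
    by (insert vs, intro trilinear_intoI;
        (rule linear_into_intros bilinear_into_compose[OF f] | assumption)+)
  moreover have "sweedler w (\<lambda>b c. f a (b * S c)) = sv (\<epsilon> w) (f a 1)" for a w
    using f sweedler_antipode_right[of sv "f a" w] by (simp add: bilinear_into_def)
  ultimately show ?thesis
    using f sweedler_counit_right[of sv "\<lambda>a. f a 1" x]
    by (simp add: sweedler3_coassoc[OF vs] bilinear_into_def)
qed

lemma sweedler3_contract23_left:
  assumes vs: "vector_space sv" and f: "bilinear_into sv f"
  shows "sweedler3 x (\<lambda>a b c. f a (S b * c)) = f x 1"
proof -
  have "trilinear_into sv (\<lambda>a b c. f a (S b * c))"
    by (insert vs, intro trilinear_intoI;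
        (rule linear_into_intros bilinear_into_compose[OF f] | assumption)+)
  moreover have "sweedler w (\<lambda>b c. f a (S b * c)) = sv (\<epsilon> w) (f a 1)" for a w
    using f sweedler_antipode_left[of sv "f a" w] by (simp add: bilinear_into_def)
  ultimately show ?thesis
    using f sweedler_counit_right[of sv "\<lambda>a. f a 1" x]
    by (simp add: sweedler3_coassoc[OF vs] bilinear_into_def)
qed

lemma sweedler3_contract12_right:
  assumes f: "bilinear_into sv f"
  shows "sweedler3 x (\<lambda>a b c. f (a * S b) c) = f 1 x"
proof -
  have "sweedler w (\<lambda>a b. f (a * S b) c) = sv (\<epsilon> w) (f 1 c)" for c w
    using f sweedler_antipode_right[of sv "\<lambda>m. f m c" w] by (simp add: bilinear_into_def)
  then show ?thesis
    using f by (simp add: sweedler3_def sweedler_counit_left bilinear_into_def)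
qed

lemma antipode_one: "S 1 = 1"
proof -
  have "bilinear_into scale (\<lambda>u v. u * S v)"
    by (intro bilinear_intoI; (rule linear_into_intros | assumption)+)
  then have "sweedler 1 (\<lambda>u v. u * S v) = S 1"
    using sweedler_one[OF vector_space_scale] by simp
  moreover have "sweedler 1 (\<lambda>u v. u * S v) = 1"
    by (simp add: antipode_right counit_one vector_space.vector_space_assms(4)[OF vector_space_scale])
  ultimately show ?thesis by simp
qed

lemma sweedler_antipode_left_mult:
  "sweedler u (\<lambda>u1 u2. sweedler w (\<lambda>w1 w2. S (u1 * w1) * (u2 * w2) * z)) = scale (\<epsilon> u) (scale (\<epsilon> w) z)"
proof -
  have "bilinear_into scale (\<lambda>p q. S p * q * z)"
    by (intro bilinear_intoI; (rule linear_into_intros | assumption)+)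
  then have "sweedler u (\<lambda>u1 u2. sweedler w (\<lambda>w1 w2. S (u1 * w1) * (u2 * w2) * z))
      = sweedler (u * w) (\<lambda>p q. S p * q * z)"
    by (rule sweedler_mult[OF vector_space_scale, symmetric])
  also have "\<dots> = scale (\<epsilon> (u * w)) (1 * z)"
    by (rule sweedler_antipode_left) (rule linear_into_intros)+
  finally show ?thesis
    by (simp add: counit_mult vector_space.vector_space_assms(3)[OF vector_space_scale])
qed

text \<open>Both sides equal \<open>S(x\<^sub>1y\<^sub>1) x\<^sub>2y\<^sub>2 S(y\<^sub>3) S(x\<^sub>3)\<close>: contract \<open>x\<^sub>2y\<^sub>2 S(y\<^sub>3) S(x\<^sub>3)\<close>
  with the antipode, or contract \<open>S((xy)\<^sub>1) (xy)\<^sub>2\<close>.\<close>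
lemma antipode_mult: "S (x * y) = S y * S x"
proof -
  define E where
    "E = sweedler3 x (\<lambda>x1 x2 x3. sweedler3 y (\<lambda>y1 y2 y3. S (x1 * y1) * (x2 * y2) * (S y3 * S x3)))"
  have inner: "sweedler3 y (\<lambda>y1 y2 y3. S (x1 * y1) * (x2 * y2) * (S y3 * S x3)) = S (x1 * y) * x2 * S x3"
    for x1 x2 x3
  proof -
    have "bilinear_into scale (\<lambda>a m. S (x1 * a) * x2 * m * S x3)"
      by (intro bilinear_intoI; (rule linear_into_intros | assumption)+)
    from sweedler3_contract23_right[OF vector_space_scale this, of y] show ?thesis
      by (simp add: mult.assoc)
  qed
  have "bilinear_into scale (\<lambda>a m. S (a * y) * m)"
    by (intro bilinear_intoI; (rule linear_into_intros | assumption)+)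
  from sweedler3_contract23_right[OF vector_space_scale this, of x]
  have "E = S (x * y)" unfolding E_def inner by (simp add: mult.assoc)
  moreover have "E = S y * S x"
  proof -
    have "E = sweedler x (\<lambda>u x3. sweedler y (\<lambda>w y3. sweedler u (\<lambda>x1 x2.
        sweedler w (\<lambda>y1 y2. S (x1 * y1) * (x2 * y2) * (S y3 * S x3)))))"
      unfolding E_def sweedler3_def by (subst tsum_swap) (rule refl)
    also have "\<dots> = sweedler x (\<lambda>u x3. scale (\<epsilon> u) (sweedler y (\<lambda>w y3. scale (\<epsilon> w) (S y3 * S x3))))"
      by (simp only: sweedler_antipode_left_mult scale_sweedler[OF vector_space_scale])
    also have "\<dots> = sweedler x (\<lambda>u x3. scale (\<epsilon> u) (S y * S x3))"
    proof -
      have "sweedler y (\<lambda>w y3. scale (\<epsilon> w) (S y3 * S x3)) = S y * S x3" for x3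
        by (rule sweedler_counit_left) (rule linear_into_intros)+
      then show ?thesis by simp
    qed
    also have "\<dots> = S y * S x"
      by (rule sweedler_counit_left) (rule linear_into_intros)+
    finally show ?thesis .
  qed
  ultimately show ?thesis by simp
qed

section \<open>Adjoint action and stable subalgebras\<close>

definition ad :: "'a \<Rightarrow> 'a \<Rightarrow> 'a" where
  "ad c d = sweedler c (\<lambda>u v. u * d * S v)"

lemma ad_one: "ad c 1 = scale (\<epsilon> c) 1"
  by (simp add: ad_def antipode_right)

lemma ad_sweedler: "ad c (sweedler x G) = sweedler x (\<lambda>u v. ad c (G u v))"
  by (rule tsum_additive) (simp add: ad_def distrib_left distrib_right tsum_add)

lemma linear_into_ad: "linear_into scale f \<Longrightarrow> linear_into scale (\<lambda>x. ad c (f x))"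
  unfolding ad_def by (rule linear_into_intros | assumption)+

lemma linear_into_ad_left: "linear_into scale (\<lambda>c. ad c d)"
  unfolding ad_def by (rule linear_into_intros | assumption)+

lemma ad_mult: "ad c (x * y) = sweedler c (\<lambda>p r. ad p x * ad r y)"
proof -
  have "sweedler c (\<lambda>p r. ad p x * ad r y)
      = sweedler c (\<lambda>p r. sweedler p (\<lambda>p1 p2. sweedler r (\<lambda>r1 r2. p1 * x * S p2 * (r1 * y * S r2))))"
    unfolding ad_def by (simp only: sweedler_distrib_right; simp only: sweedler_distrib_left)
  also have "\<dots> = sweedler4 c (\<lambda>p1 p2 r1 r2. p1 * x * S p2 * (r1 * y * S r2))"
    by (simp add: sweedler4_def)
  also have "\<dots> = sweedler3 c (\<lambda>a w d. sweedler w (\<lambda>b e. a * x * S b * (e * y * S d)))"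
    by (rule sweedler4_group23[OF vector_space_scale])
      (intro quadrilinear_intoI; (rule linear_into_intros | assumption)+)
  also have "\<dots> = sweedler3 c (\<lambda>a w d. scale (\<epsilon> w) (a * x * y * S d))"
  proof -
    have "sweedler w (\<lambda>b e. a * x * S b * (e * y * S d)) = scale (\<epsilon> w) (a * x * y * S d)" for a w d
      using sweedler_antipode_left[of scale "\<lambda>m. a * x * m * y * S d" w] linear_into_intros
      by (simp add: mult.assoc)
    then show ?thesis by simp
  qed
  also have "\<dots> = sweedler c (\<lambda>u d. u * x * y * S d)"
  proof -
    have "sweedler u (\<lambda>a w. scale (\<epsilon> w) (a * x * y * S d)) = u * x * y * S d" for u d
      by (rule sweedler_counit_right) (rule linear_into_intros)+
    then show ?thesis by (simp add: sweedler3_def)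
  qed
  finally show ?thesis unfolding ad_def by (simp add: mult.assoc)
qed

lemma subalgebra_zero: "subalgebra scale B \<Longrightarrow> 0 \<in> B"
  using vector_space.scale_eq_0_iff[OF vector_space_scale, of 0 1] unfolding subalgebra_def by metis

lemma subalgebra_tsum:
  "subalgebra scale B \<Longrightarrow> (\<And>u v. (u, v) \<in> set t \<Longrightarrow> F u v \<in> B) \<Longrightarrow> tsum F t \<in> B"
  by (induction t) (auto simp: subalgebra_zero subalgebra_def)

lemma subalgebra_ad_stable:
  assumes C: "subalgebra scale C"
  shows "subalgebra scale {d \<in> C. \<forall>c. ad c d \<in> C}"
  unfolding subalgebra_def
proof (intro conjI ballI allI)
  show "1 \<in> {d \<in> C. \<forall>c. ad c d \<in> C}"
    using C by (simp add: ad_one subalgebra_def)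
next
  fix x y assume "x \<in> {d \<in> C. \<forall>c. ad c d \<in> C}" "y \<in> {d \<in> C. \<forall>c. ad c d \<in> C}"
  then show "x + y \<in> {d \<in> C. \<forall>c. ad c d \<in> C}" "x * y \<in> {d \<in> C. \<forall>c. ad c d \<in> C}"
    using C linear_into_add[OF linear_into_ad[OF linear_into_id]]
    by (auto simp: subalgebra_def ad_mult intro!: subalgebra_tsum[OF C])
next
  fix k x assume "x \<in> {d \<in> C. \<forall>c. ad c d \<in> C}"
  then show "scale k x \<in> {d \<in> C. \<forall>c. ad c d \<in> C}"
    using C linear_into_scale[OF linear_into_ad[OF linear_into_id]]
    by (auto simp: subalgebra_def)
qed

lemma subalgebra_antipode_stable:
  assumes C: "subalgebra scale C"
  shows "subalgebra scale {d \<in> C. S d \<in> C}"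
  using C antipode_one by (simp add: subalgebra_def antipode_add antipode_mult antipode_scale)

definition coproduct_in :: "'a set \<Rightarrow> 'a \<Rightarrow> bool" where
  "coproduct_in C d \<longleftrightarrow> (\<exists>t. set t \<subseteq> C \<times> C \<and> teq scale (\<Delta> d) t)"

lemma coproduct_in_one: "subalgebra scale C \<Longrightarrow> coproduct_in C 1"
  using teq_Delta_one unfolding coproduct_in_def subalgebra_def by (intro exI[of _ "[(1, 1)]"]) auto

lemma coproduct_in_add:
  assumes "coproduct_in C x" "coproduct_in C y"
  shows "coproduct_in C (x + y)"
proof -
  obtain tx ty where x: "set tx \<subseteq> C \<times> C" "teq scale (\<Delta> x) tx"
    and y: "set ty \<subseteq> C \<times> C" "teq scale (\<Delta> y) ty"
    using assms by (auto simp: coproduct_in_def)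
  have "teq scale (\<Delta> (x + y)) (tx @ ty)"
    unfolding teq_iff_bilinear_into
  proof (intro allI impI)
    fix F :: "'a \<Rightarrow> 'a \<Rightarrow> 'k" assume F: "bilinear_into (*) F"
    show "tsum F (\<Delta> (x + y)) = tsum F (tx @ ty)"
      using sweedler_add[OF vector_space_field_self F] teq_tsum_bilinear[OF vector_space_field_self _ F] x y
      by simp
  qed
  with x y show ?thesis unfolding coproduct_in_def by (intro exI[of _ "tx @ ty"]) auto
qed

lemma coproduct_in_scale:
  assumes "subalgebra scale C" "coproduct_in C x"
  shows "coproduct_in C (scale k x)"
proof -
  obtain tx where x: "set tx \<subseteq> C \<times> C" "teq scale (\<Delta> x) tx"
    using assms by (auto simp: coproduct_in_def)
  have "teq scale (\<Delta> (scale k x)) (map (\<lambda>(u, v). (scale k u, v)) tx)"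
    unfolding teq_iff_bilinear_into
  proof (intro allI impI)
    fix F :: "'a \<Rightarrow> 'a \<Rightarrow> 'k" assume F: "bilinear_into (*) F"
    have "tsum F (\<Delta> (scale k x)) = k * tsum F tx"
      using sweedler_scale[OF vector_space_field_self F] teq_tsum_bilinear[OF vector_space_field_self x(2) F]
      by simp
    also have "\<dots> = tsum F (map (\<lambda>(u, v). (scale k u, v)) tx)"
      using F by (simp add: tsum_map tsum_additive[of "\<lambda>z. k * z", OF distrib_left] case_prod_beta
          bilinear_into_def linear_into_def)
    finally show "tsum F (\<Delta> (scale k x)) = tsum F (map (\<lambda>(u, v). (scale k u, v)) tx)" .
  qed
  with assms(1) x show ?thesis
    unfolding coproduct_in_def subalgebra_def by (intro exI[of _ "map (\<lambda>(u, v). (scale k u, v)) tx"]) auto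
qed

lemma coproduct_in_comultiplicative:
  assumes f_lin: "\<And>u. linear_into scale (f u)" "\<And>p. linear_into scale (\<lambda>u. f u p)"
    and f_Delta: "\<And>F :: 'a \<Rightarrow> 'a \<Rightarrow> 'k. bilinear_into (*) F \<Longrightarrow>
      sweedler (f a b) F = sweedler a (\<lambda>u v. sweedler b (\<lambda>p q. F (f u p) (f v q)))"
    and "coproduct_in A a" "coproduct_in B b" and f_mem: "\<And>u p. u \<in> A \<Longrightarrow> p \<in> B \<Longrightarrow> f u p \<in> C"
  shows "coproduct_in C (f a b)"
proof -
  obtain ta tb where a: "set ta \<subseteq> A \<times> A" "teq scale (\<Delta> a) ta"
    and b: "set tb \<subseteq> B \<times> B" "teq scale (\<Delta> b) tb"
    using assms(4,5) by (auto simp: coproduct_in_def)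
  define t where "t = concat (map (\<lambda>(u, v). map (\<lambda>(p, q). (f u p, f v q)) tb) ta)"
  have "teq scale (\<Delta> (f a b)) t"
    unfolding teq_iff_bilinear_into
  proof (intro allI impI)
    fix F :: "'a \<Rightarrow> 'a \<Rightarrow> 'k" assume F: "bilinear_into (*) F"
    have "bilinear_into (*) (\<lambda>p q. F (f u p) (f v q))" for u v
      by (insert vector_space_field_self,
          intro bilinear_intoI; (rule linear_into_intros bilinear_into_compose[OF F] f_lin | assumption)+)
    moreover have "bilinear_into (*) (\<lambda>u v. sweedler b (\<lambda>p q. F (f u p) (f v q)))"
      by (insert vector_space_field_self,
          intro bilinear_intoI; (rule linear_into_intros bilinear_into_compose[OF F] f_lin | assumption)+)
    ultimately show "tsum F (\<Delta> (f a b)) = tsum F t"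
      using f_Delta[OF F] teq_tsum_bilinear[OF vector_space_field_self a(2)]
        teq_tsum_bilinear[OF vector_space_field_self b(2)]
      by (simp add: t_def tsum_concat tsum_map case_prod_beta)
  qed
  moreover have "set t \<subseteq> C \<times> C"
    using a(1) b(1) f_mem by (fastforce simp: t_def)
  ultimately show ?thesis unfolding coproduct_in_def by blast
qed

lemma subalgebra_coproduct_stable:
  assumes C: "subalgebra scale C"
  shows "subalgebra scale {d \<in> C. coproduct_in C d}"
proof -
  have "coproduct_in C (x * y)" if "coproduct_in C x" "coproduct_in C y" for x y
    by (rule coproduct_in_comultiplicative[where f="(*)", OF _ _ sweedler_mult[OF vector_space_field_self] that])
      (use C in \<open>auto simp: subalgebra_def intro: linear_into_intros linear_into_id[THEN linear_into_mult_right]\<close>)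
  with C show ?thesis
    by (auto simp: subalgebra_def coproduct_in_one coproduct_in_add coproduct_in_scale)
qed

lemma sweedler_mem:
  assumes "subalgebra scale C" "coproduct_in B b" "bilinear_into scale G"
    and "\<And>u v. u \<in> B \<Longrightarrow> v \<in> B \<Longrightarrow> G u v \<in> C"
  shows "sweedler b G \<in> C"
proof -
  obtain t where t: "set t \<subseteq> B \<times> B" "teq scale (\<Delta> b) t"
    using assms(2) by (auto simp: coproduct_in_def)
  have "tsum G t \<in> C"
    using t(1) assms(4) by (auto intro: subalgebra_tsum[OF assms(1)])
  then show ?thesis
    using teq_tsum_bilinear[OF vector_space_scale t(2) assms(3)] by simp
qed

lemma normal_hopf_subalgebra_iff:
  "normal_hopf_subalgebra scale \<Delta> S D \<longleftrightarrow>
    subalgebra scale D \<and> (\<forall>d\<in>D. coproduct_in D d) \<and> (\<forall>d\<in>D. S d \<in> D) \<and> (\<forall>c. \<forall>d\<in>D. ad c d \<in> D)"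
  by (auto simp: normal_hopf_subalgebra_def hopf_subalgebra_def coproduct_in_def ad_def)

end

section \<open>Cocommutative Hopf algebras\<close>

locale cocomm_hopf_alg = hopf_alg +
  assumes cocommutative: "cocommutative scale \<Delta>"
begin

abbreviation br where
  "br \<equiv> hopf_bracket \<Delta> S"

lemma sweedler_swap:
  assumes "vector_space sv" "bilinear_into sv F"
  shows "sweedler x F = sweedler x (\<lambda>u v. F v u)"
proof -
  have "teq scale (\<Delta> x) (map prod.swap (\<Delta> x))"
    using cocommutative by (simp add: cocommutative_def)
  from teq_tsum_bilinear[OF assms(1) this assms(2)] show ?thesis
    by (simp add: tsum_map)
qed

lemma sweedler3_swap12:
  assumes vs: "vector_space sv" and G: "trilinear_into sv G"
  shows "sweedler3 x G = sweedler3 x (\<lambda>a b c. G b a c)"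
proof -
  have "sweedler u (\<lambda>p q. G p q v) = sweedler u (\<lambda>p q. G q p v)" for u v
    by (rule sweedler_swap[OF vs])
      (insert vs, intro bilinear_intoI; (rule linear_into_intros trilinear_into_compose[OF G] | assumption)+)
  then show ?thesis unfolding sweedler3_def by simp
qed

lemma sweedler4_swap23:
  assumes vs: "vector_space sv" and H: "quadrilinear_into sv H"
  shows "sweedler4 x H = sweedler4 x (\<lambda>a b c d. H a c b d)"
proof -
  have H': "quadrilinear_into sv (\<lambda>a b c d. H a c b d)"
    using H by (simp add: quadrilinear_into_def)
  have "sweedler w (\<lambda>b c. H a b c d) = sweedler w (\<lambda>b c. H a c b d)" for a w d
    by (rule sweedler_swap[OF vs])
      (insert vs, intro bilinear_intoI; (rule linear_into_intros quadrilinear_into_compose[OF H] | assumption)+)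
  then show ?thesis unfolding sweedler4_group23[OF vs H] sweedler4_group23[OF vs H'] by simp
qed

lemma sweedler4_swap34:
  assumes vs: "vector_space sv" and H: "quadrilinear_into sv H"
  shows "sweedler4 x H = sweedler4 x (\<lambda>a b c d. H a b d c)"
proof -
  have "sweedler v (\<lambda>c d. H a b c d) = sweedler v (\<lambda>c d. H a b d c)" for a b v
    by (rule sweedler_swap[OF vs])
      (insert vs, intro bilinear_intoI; (rule linear_into_intros quadrilinear_into_compose[OF H] | assumption)+)
  then show ?thesis unfolding sweedler4_def by simp
qed

lemma antipode_antipode: "S (S x) = x"
proof -
  have "bilinear_into scale (\<lambda>a m. S (S a) * m)"
    by (intro bilinear_intoI; (rule linear_into_intros | assumption)+)
  from sweedler3_contract23_left[OF vector_space_scale this, of x]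
  have "sweedler3 x (\<lambda>a b c. S (S a) * S b * c) = S (S x)"
    by (simp add: mult.assoc)
  moreover have "sweedler3 x (\<lambda>a b c. S (S a) * S b * c) = x"
  proof -
    have "sweedler3 x (\<lambda>a b c. S (S a) * S b * c) = sweedler3 x (\<lambda>a b c. S (b * S a) * c)"
      by (simp add: antipode_mult)
    also have "\<dots> = sweedler3 x (\<lambda>a b c. S (a * S b) * c)"
      by (rule sweedler3_swap12[OF vector_space_scale])
        (intro trilinear_intoI; (rule linear_into_intros | assumption)+)
    also have "\<dots> = x"
      using sweedler3_contract12_right[of scale "\<lambda>m c. S m * c" x] antipode_one
      by (simp add: bilinear_intoI linear_into_intros)
    finally show ?thesis .
  qed
  ultimately show ?thesis by simp
qed

lemma sweedler3_Delta_antipode: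
  assumes vs: "vector_space sv" and F: "bilinear_into sv F"
  shows "sweedler3 w (\<lambda>a b c. sweedler a (\<lambda>a1 a2. F (s * a1 * S b) (t * a2 * S c))) = sv (\<epsilon> w) (F s t)"
proof -
  define Q where "Q = (\<lambda>a1 a2 b c. F (s * a1 * S b) (t * a2 * S c))"
  have Q: "quadrilinear_into sv Q"
    unfolding Q_def
    by (insert vs, intro quadrilinear_intoI; (rule linear_into_intros bilinear_into_compose[OF F] | assumption)+)
  have contract: "sweedler p (\<lambda>a1 b. sweedler q (\<lambda>a2 c. Q a1 a2 b c)) = sv (\<epsilon> p) (sv (\<epsilon> q) (F s t))"
    for p q
  proof -
    have "linear_into sv (\<lambda>m. F (s * a1 * S b) (t * m))" "linear_into sv (\<lambda>m. F (s * m) t)" for a1 b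
      by (rule bilinear_into_compose[OF F] linear_into_intros)+
    from sweedler_antipode_right[OF this(1)] sweedler_antipode_right[OF this(2)]
    show ?thesis
      by (simp add: Q_def mult.assoc scale_sweedler[OF vs, symmetric] vector_space.vector_space_assms(3)[OF vs]
          mult.commute)
  qed
  have "sweedler3 w (\<lambda>a b c. sweedler a (\<lambda>a1 a2. Q a1 a2 b c)) = sweedler4 w Q"
    by (rule sweedler4_group12[OF vs Q, symmetric])
  also have "\<dots> = sweedler4 w (\<lambda>a b c d. Q a c b d)"
    by (rule sweedler4_swap23[OF vs Q])
  also have "\<dots> = sweedler w (\<lambda>p q. sv (\<epsilon> p) (sv (\<epsilon> q) (F s t)))"
    by (simp add: sweedler4_def contract)
  also have "\<dots> = sv (\<epsilon> w) (F s t)"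
    by (rule sweedler_counit_left) (rule linear_into_counit[OF vs])
  finally show ?thesis by (simp add: Q_def)
qed

lemma scale_counit_sweedler:
  assumes vs: "vector_space sv" and F: "bilinear_into sv F"
  shows "sv (\<epsilon> w) (sweedler y F) = sweedler3 w (\<lambda>a b c. sweedler (y * a) (\<lambda>s t. F (s * S b) (t * S c)))"
proof -
  have "sweedler (y * a) (\<lambda>s t. F (s * S b) (t * S c))
      = sweedler y (\<lambda>s1 t1. sweedler a (\<lambda>s2 t2. F (s1 * s2 * S b) (t1 * t2 * S c)))" for a b c
    by (rule sweedler_mult[OF vs])
      (insert vs, intro bilinear_intoI; (rule linear_into_intros bilinear_into_compose[OF F] | assumption)+)
  then have "sweedler3 w (\<lambda>a b c. sweedler (y * a) (\<lambda>s t. F (s * S b) (t * S c)))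
      = sweedler y (\<lambda>s1 t1. sweedler3 w (\<lambda>a b c. sweedler a (\<lambda>s2 t2. F (s1 * s2 * S b) (t1 * t2 * S c))))"
    unfolding sweedler3_def by (simp only: tsum_swap[of _ "\<Delta> y"])
  also have "\<dots> = sv (\<epsilon> w) (sweedler y F)"
    by (simp add: sweedler3_Delta_antipode[OF vs F] scale_sweedler[OF vs])
  finally show ?thesis ..
qed

text \<open>\<open>\<Delta>(S x) = \<Delta>(S x\<^sub>1) \<Delta>(x\<^sub>2) (S x\<^sub>3 \<otimes> S x\<^sub>4) = \<Delta>(S x\<^sub>1 x\<^sub>2) (S x\<^sub>3 \<otimes> S x\<^sub>4)
  = S x\<^sub>1 \<otimes> S x\<^sub>2\<close>\<close>
lemma sweedler_antipode:
  assumes vs: "vector_space sv" and F: "bilinear_into sv F"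
  shows "sweedler (S x) F = sweedler x (\<lambda>u v. F (S u) (S v))"
proof -
  define H where "H = (\<lambda>u a b c. sweedler (S u * a) (\<lambda>s t. F (s * S b) (t * S c)))"
  have H: "quadrilinear_into sv H"
    unfolding H_def
    by (insert vs, intro quadrilinear_intoI; (rule linear_into_intros bilinear_into_compose[OF F] | assumption)+)
  have "S x = sweedler x (\<lambda>u w. scale (\<epsilon> w) (S u))"
    by (rule sweedler_counit_right[symmetric]) (rule linear_into_intros)+
  then have "sweedler (S x) F = sweedler x (\<lambda>u w. sv (\<epsilon> w) (sweedler (S u) F))"
    by (simp add: sweedler_sweedler[OF vs F] sweedler_scale[OF vs F])
  also have "\<dots> = sweedler4 x H"
    unfolding sweedler4_group234[OF vs H] by (simp add: H_def scale_counit_sweedler[OF vs F])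
  also have "\<dots> = sweedler3 x (\<lambda>m b c. sweedler m (\<lambda>u a. H u a b c))"
    by (rule sweedler4_group12[OF vs H])
  also have "\<dots> = sweedler3 x (\<lambda>m b c. sv (\<epsilon> m) (F (S b) (S c)))"
  proof -
    have bil: "bilinear_into sv (\<lambda>s t. F (s * S b) (t * S c))" for b c
      by (insert vs, intro bilinear_intoI; (rule linear_into_intros bilinear_into_compose[OF F] | assumption)+)
    from sweedler_antipode_left[OF linear_into_sweedler_arg[OF vs bil linear_into_id]]
    show ?thesis by (simp add: H_def sweedler_one[OF vs bil])
  qed
  also have "\<dots> = sweedler x (\<lambda>u v. F (S u) (S v))"
    using sweedler_counit_left[OF bilinear_into_compose(1)[OF F], of "\<lambda>x. S x"] linear_into_intros
    by (simp add: sweedler3_def)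
  finally show ?thesis .
qed

lemma ad_antipode: "S (ad c x) = ad c (S x)"
proof -
  have "S (ad c x) = sweedler c (\<lambda>u v. v * S x * S u)"
    by (simp add: ad_def antipode_sweedler antipode_mult antipode_antipode mult.assoc)
  also have "\<dots> = ad c (S x)"
    unfolding ad_def
    by (rule sweedler_swap[OF vector_space_scale]) (intro bilinear_intoI; (rule linear_into_intros | assumption)+)
  finally show ?thesis .
qed

lemma sweedler_ad:
  assumes vs: "vector_space sv" and F: "bilinear_into sv F"
  shows "sweedler (ad c a) F = sweedler c (\<lambda>u v. sweedler a (\<lambda>p q. F (ad u p) (ad v q)))"
proof -
  have conj: "sweedler (u * a * S v) F
      = sweedler u (\<lambda>u1 u2. sweedler a (\<lambda>a1 a2. sweedler v (\<lambda>v1 v2. F (u1 * a1 * S v1) (u2 * a2 * S v2))))"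
    for u v
  proof -
    have "bilinear_into sv (\<lambda>s t. sweedler v (\<lambda>v1 v2. F (s * S v1) (t * S v2)))"
      "bilinear_into sv (\<lambda>s' t'. F (s * s') (t * t'))" for s t
      by (insert vs, intro bilinear_intoI; (rule linear_into_intros bilinear_into_compose[OF F] | assumption)+)+
    then show ?thesis
      by (simp add: F sweedler_mult[OF vs] sweedler_antipode[OF vs])
  qed
  have "sweedler (ad c a) F
      = sweedler a (\<lambda>a1 a2. sweedler4 c (\<lambda>u1 u2 v1 v2. F (u1 * a1 * S v1) (u2 * a2 * S v2)))"
    unfolding ad_def sweedler4_def by (simp add: sweedler_sweedler[OF vs F] conj tsum_swap[of _ "\<Delta> a"])
  also have "\<dots> = sweedler a (\<lambda>a1 a2. sweedler4 c (\<lambda>u1 u2 v1 v2. F (u1 * a1 * S u2) (v1 * a2 * S v2)))"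
  proof -
    have "quadrilinear_into sv (\<lambda>u1 u2 v1 v2. F (u1 * a1 * S v1) (u2 * a2 * S v2))" for a1 a2
      by (insert vs, intro quadrilinear_intoI; (rule linear_into_intros bilinear_into_compose[OF F] | assumption)+)
    from sweedler4_swap23[OF vs this] show ?thesis by simp
  qed
  also have "\<dots> = sweedler c (\<lambda>u v. sweedler a (\<lambda>p q. F (ad u p) (ad v q)))"
    unfolding sweedler4_def ad_def
    by (simp only: bilinear_into_sweedler1[OF F]; simp only: bilinear_into_sweedler2[OF F])
      (subst tsum_swap, rule refl)
  finally show ?thesis .
qed

lemma bracket_eq_sweedler_ad: "br a b = sweedler b (\<lambda>p q. ad a p * S q)"
  unfolding hopf_bracket_def ad_def by (subst tsum_swap) (simp add: sweedler_distrib_right)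

lemma sweedler_bracket:
  assumes vs: "vector_space sv" and F: "bilinear_into sv F"
  shows "sweedler (br a b) F = sweedler a (\<lambda>u v. sweedler b (\<lambda>p q. F (br u p) (br v q)))"
proof -
  have expand: "sweedler (ad a p * S q) F = sweedler a (\<lambda>a1 a2. sweedler p (\<lambda>p1 p2.
      sweedler q (\<lambda>q1 q2. F (ad a1 p1 * S q1) (ad a2 p2 * S q2))))" for p q
  proof -
    have "bilinear_into sv (\<lambda>s t. sweedler q (\<lambda>q1 q2. F (s * S q1) (t * S q2)))"
      "bilinear_into sv (\<lambda>s' t'. F (s * s') (t * t'))" for s t
      by (insert vs, intro bilinear_intoI; (rule linear_into_intros bilinear_into_compose[OF F] | assumption)+)+
    then show ?thesis
      by (simp add: F sweedler_mult[OF vs] sweedler_antipode[OF vs] sweedler_ad[OF vs])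
  qed
  have "sweedler (br a b) F = sweedler a (\<lambda>a1 a2.
      sweedler4 b (\<lambda>p1 p2 q1 q2. F (ad a1 p1 * S q1) (ad a2 p2 * S q2)))"
    unfolding bracket_eq_sweedler_ad[of a b] sweedler4_def
    by (simp add: sweedler_sweedler[OF vs F] expand tsum_swap[of _ "\<Delta> a"])
  also have "\<dots> = sweedler a (\<lambda>a1 a2.
      sweedler4 b (\<lambda>p1 p2 q1 q2. F (ad a1 p1 * S p2) (ad a2 q1 * S q2)))"
  proof -
    have "quadrilinear_into sv (\<lambda>p1 p2 q1 q2. F (ad a1 p1 * S q1) (ad a2 p2 * S q2))" for a1 a2
      by (insert vs, intro quadrilinear_intoI;
          (rule linear_into_intros linear_into_ad bilinear_into_compose[OF F] | assumption)+)
    from sweedler4_swap23[OF vs this] show ?thesis by simp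
  qed
  also have "\<dots> = sweedler a (\<lambda>u v. sweedler b (\<lambda>p q. F (br u p) (br v q)))"
    unfolding sweedler4_def bracket_eq_sweedler_ad
    by (simp only: bilinear_into_sweedler1[OF F]; simp only: bilinear_into_sweedler2[OF F])
  finally show ?thesis .
qed

lemma ad_mult4:
  "sweedler4 c (\<lambda>c1 c2 c3 c4. ad c1 x1 * ad c2 x2 * ad c3 x3 * ad c4 x4) = ad c (x1 * x2 * x3 * x4)"
proof -
  have "quadrilinear_into scale (\<lambda>c1 c2 c3 c4. ad c1 x1 * ad c2 x2 * ad c3 x3 * ad c4 x4)"
    by (intro quadrilinear_intoI; (rule linear_into_intros linear_into_ad_left | assumption)+)
  then have "sweedler4 c (\<lambda>c1 c2 c3 c4. ad c1 x1 * ad c2 x2 * ad c3 x3 * ad c4 x4)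
      = sweedler3 c (\<lambda>w c3 c4. ad w (x1 * x2) * ad c3 x3 * ad c4 x4)"
    by (simp add: sweedler4_group12[OF vector_space_scale] ad_mult sweedler_distrib_right)
  also have "\<dots> = sweedler c (\<lambda>m c4. ad m (x1 * x2 * x3) * ad c4 x4)"
    by (simp add: sweedler3_def ad_mult[of _ "x1 * x2" x3] sweedler_distrib_right)
  also have "\<dots> = ad c (x1 * x2 * x3 * x4)"
    by (simp add: ad_mult[of _ "x1 * x2 * x3" x4])
  finally show ?thesis .
qed

lemma bracket_ad_ad:
  "br (ad u a) (ad v b) = sweedler u (\<lambda>u1 u2. sweedler v (\<lambda>v1 v2. sweedler a (\<lambda>a1 a2. sweedler b (\<lambda>b1 b2.
      ad u1 a1 * ad v1 b1 * ad u2 (S a2) * ad v2 (S b2)))))"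
proof -
  have "bilinear_into scale (\<lambda>x1 x2. sweedler (ad v b) (\<lambda>y1 y2. x1 * y1 * S x2 * S y2))"
    "bilinear_into scale (\<lambda>y1 y2. X * y1 * Z * S y2)" for X Z
    by (intro bilinear_intoI; (rule linear_into_intros | assumption)+)+
  then have "br (ad u a) (ad v b) = sweedler u (\<lambda>u1 u2. sweedler a (\<lambda>a1 a2. sweedler v (\<lambda>v1 v2.
      sweedler b (\<lambda>b1 b2. ad u1 a1 * ad v1 b1 * S (ad u2 a2) * S (ad v2 b2)))))"
    unfolding hopf_bracket_def by (simp only: sweedler_ad[OF vector_space_scale])
  also have "\<dots> = sweedler u (\<lambda>u1 u2. sweedler v (\<lambda>v1 v2. sweedler a (\<lambda>a1 a2. sweedler b (\<lambda>b1 b2.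
      ad u1 a1 * ad v1 b1 * ad u2 (S a2) * ad v2 (S b2)))))"
    by (simp only: ad_antipode tsum_swap[of _ "\<Delta> v"])
  finally show ?thesis .
qed

text \<open>By multiplicativity of \<open>ad\<close>, \<open>ad c {a, b} = ad c\<^sub>1 a\<^sub>1 ad c\<^sub>2 b\<^sub>1 ad c\<^sub>3 (S a\<^sub>2) ad c\<^sub>4 (S b\<^sub>2)\<close>;
  exchanging the middle factors of \<open>c\<close> gives the expansion of \<open>{ad c\<^sub>1 a, ad c\<^sub>2 b}\<close>.\<close>
lemma ad_bracket: "ad c (br a b) = sweedler c (\<lambda>u v. br (ad u a) (ad v b))"
proof -
  have "quadrilinear_into scale (\<lambda>u1 u2 v1 v2. sweedler a (\<lambda>a1 a2. sweedler b (\<lambda>b1 b2.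
      ad u1 a1 * ad v1 b1 * ad u2 (S a2) * ad v2 (S b2))))"
    by (intro quadrilinear_intoI; (rule linear_into_intros linear_into_ad_left | assumption)+)
  from sweedler4_swap23[OF vector_space_scale this, of c]
  have "sweedler c (\<lambda>u v. br (ad u a) (ad v b)) = sweedler4 c (\<lambda>c1 c2 c3 c4. sweedler a (\<lambda>a1 a2.
      sweedler b (\<lambda>b1 b2. ad c1 a1 * ad c2 b1 * ad c3 (S a2) * ad c4 (S b2))))"
    by (simp add: bracket_ad_ad sweedler4_def)
  also have "\<dots> = sweedler a (\<lambda>a1 a2. sweedler b (\<lambda>b1 b2. ad c (a1 * b1 * S a2 * S b2)))"
    unfolding sweedler4_def
    by (simp only: tsum_swap[of _ "\<Delta> b"]; simp only: tsum_swap[of _ "\<Delta> a"])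
      (simp only: sweedler4_def[symmetric] ad_mult4)
  also have "\<dots> = ad c (br a b)"
    unfolding hopf_bracket_def by (simp only: ad_sweedler)
  finally show ?thesis ..
qed

lemma antipode_bracket: "S (br a b) = br b a"
proof -
  have "S (br a b) = sweedler a (\<lambda>u v. sweedler b (\<lambda>p q. q * v * S p * S u))"
    by (simp add: hopf_bracket_def antipode_sweedler antipode_mult antipode_antipode mult.assoc)
  also have "\<dots> = sweedler a (\<lambda>u v. sweedler b (\<lambda>p q. p * v * S q * S u))"
  proof -
    have "sweedler b (\<lambda>p q. q * v * S p * S u) = sweedler b (\<lambda>p q. p * v * S q * S u)" for u v
      by (rule sweedler_swap[OF vector_space_scale]) (intro bilinear_intoI; (rule linear_into_intros | assumption)+)
    then show ?thesis by simp
  qed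
  also have "\<dots> = sweedler a (\<lambda>u v. sweedler b (\<lambda>p q. p * u * S q * S v))"
    by (rule sweedler_swap[OF vector_space_scale]) (intro bilinear_intoI; (rule linear_into_intros | assumption)+)
  also have "\<dots> = br b a"
    unfolding hopf_bracket_def by (rule tsum_swap)
  finally show ?thesis .
qed

lemma ad_bracket_antipode:
  "ad u (br a (S v)) = sweedler u (\<lambda>u1 u2. sweedler v (\<lambda>v1 v2. sweedler a (\<lambda>a1 a2.
      u1 * (a1 * S v1 * S a2 * v2) * S u2)))"
proof -
  have "bilinear_into scale (\<lambda>p q. a1 * p * S a2 * S q)" for a1 a2
    by (intro bilinear_intoI; (rule linear_into_intros | assumption)+)
  then have "ad u (br a (S v)) = ad u (sweedler a (\<lambda>a1 a2. sweedler v (\<lambda>v1 v2. a1 * S v1 * S a2 * S (S v2))))"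
    unfolding hopf_bracket_def by (simp only: sweedler_antipode[OF vector_space_scale])
  also have "\<dots> = sweedler a (\<lambda>a1 a2. sweedler v (\<lambda>v1 v2. sweedler u (\<lambda>u1 u2.
      u1 * (a1 * S v1 * S a2 * v2) * S u2)))"
    by (simp only: ad_sweedler antipode_antipode, simp only: ad_def)
  also have "\<dots> = sweedler u (\<lambda>u1 u2. sweedler v (\<lambda>v1 v2. sweedler a (\<lambda>a1 a2.
      u1 * (a1 * S v1 * S a2 * v2) * S u2)))"
    by (simp only: tsum_swap[of _ "\<Delta> v"]; simp only: tsum_swap[of _ "\<Delta> u"])
  finally show ?thesis .
qed

text \<open>Summing \<open>ad b\<^sub>1 {a, S b\<^sub>2} = b\<^sub>1 a\<^sub>1 S b\<^sub>3 S a\<^sub>2 b\<^sub>4 S b\<^sub>2\<close> and reordering the factors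
  of \<open>b\<close> leaves \<open>b\<^sub>1 a\<^sub>1 S b\<^sub>2 S a\<^sub>2 \<epsilon>(b\<^sub>3) = {b, a}\<close>.\<close>
lemma bracket_swap: "br b a = sweedler b (\<lambda>u v. ad u (br a (S v)))"
proof -
  define H where "H = (\<lambda>u1 u2 v1 v2. sweedler a (\<lambda>a1 a2. u1 * (a1 * S v1 * S a2 * v2) * S u2))"
  have H: "quadrilinear_into scale H"
    unfolding H_def by (intro quadrilinear_intoI; (rule linear_into_intros | assumption)+)
  have H': "quadrilinear_into scale (\<lambda>a b c d. H a c b d)"
    using H by (simp add: quadrilinear_into_def)
  have "sweedler b (\<lambda>u v. ad u (br a (S v))) = sweedler4 b H"
    by (simp add: ad_bracket_antipode sweedler4_def H_def)
  also have "\<dots> = sweedler4 b (\<lambda>a b c d. H a d b c)"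
    using sweedler4_swap23[OF vector_space_scale H] sweedler4_swap34[OF vector_space_scale H', of b] by simp
  also have "\<dots> = sweedler3 b (\<lambda>c1 c2 w. sweedler w (\<lambda>c3 c4.
      sweedler a (\<lambda>a1 a2. c1 * a1 * S c2 * S a2) * (c3 * S c4)))"
    unfolding H_def sweedler4_group34 by (simp add: sweedler_distrib_right mult.assoc)
  also have "\<dots> = sweedler b (\<lambda>u w. scale (\<epsilon> w) (sweedler u (\<lambda>c1 c2. sweedler a (\<lambda>a1 a2. c1 * a1 * S c2 * S a2))))"
    using sweedler_antipode_right[OF linear_into_mult_left[OF linear_into_id]]
    by (simp add: sweedler3_def scale_sweedler[OF vector_space_scale])
  also have "\<dots> = br b a"
    unfolding hopf_bracket_def
    by (rule sweedler_counit_right) (rule linear_into_sweedler_arg linear_into_intros | intro bilinear_intoI)+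
  finally show ?thesis ..
qed

section \<open>The commutator of normal Hopf subalgebras\<close>

lemma linear_into_bracket_left: "linear_into scale f \<Longrightarrow> linear_into scale (\<lambda>x. br (f x) b)"
  and linear_into_bracket_right: "linear_into scale f \<Longrightarrow> linear_into scale (\<lambda>x. br a (f x))"
  unfolding hopf_bracket_def by (rule linear_into_intros | intro bilinear_intoI | assumption)+

lemma bracket_mem_commutator: "a \<in> X \<Longrightarrow> b \<in> Y \<Longrightarrow> br a b \<in> hopf_commutator scale \<Delta> S X Y"
  unfolding hopf_commutator_def by (rule generated_subalgebra_superset) blast

lemma subalgebra_commutator: "subalgebra scale (hopf_commutator scale \<Delta> S X Y)"
  unfolding hopf_commutator_def by (rule subalgebra_generated_subalgebra)

lemma commutator_ad_closed:
  assumes X: "normal_hopf_subalgebra scale \<Delta> S X" and Y: "normal_hopf_subalgebra scale \<Delta> S Y"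
    and d: "d \<in> hopf_commutator scale \<Delta> S X Y"
  shows "ad c d \<in> hopf_commutator scale \<Delta> S X Y"
proof -
  have "\<forall>c. ad c d \<in> hopf_commutator scale \<Delta> S X Y"
    using d
  proof (rule hopf_commutator_induct)
    show "subalgebra scale {d \<in> hopf_commutator scale \<Delta> S X Y. \<forall>c. ad c d \<in> hopf_commutator scale \<Delta> S X Y}"
      by (rule subalgebra_ad_stable[OF subalgebra_commutator])
  next
    fix a b assume "a \<in> X" "b \<in> Y"
    with X Y show "\<forall>c. ad c (br a b) \<in> hopf_commutator scale \<Delta> S X Y"
      by (auto simp: ad_bracket normal_hopf_subalgebra_iff
          intro!: subalgebra_tsum[OF subalgebra_commutator] bracket_mem_commutator)
  qed
  then show ?thesis ..
qed

lemma commutator_antipode_closed: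
  assumes X: "normal_hopf_subalgebra scale \<Delta> S X" and Y: "normal_hopf_subalgebra scale \<Delta> S Y"
    and d: "d \<in> hopf_commutator scale \<Delta> S X Y"
  shows "S d \<in> hopf_commutator scale \<Delta> S X Y"
  using d
proof (rule hopf_commutator_induct)
  show "subalgebra scale {d \<in> hopf_commutator scale \<Delta> S X Y. S d \<in> hopf_commutator scale \<Delta> S X Y}"
    by (rule subalgebra_antipode_stable[OF subalgebra_commutator])
next
  fix a b assume ab: "a \<in> X" "b \<in> Y"
  have bil: "bilinear_into scale (\<lambda>u v. ad u (br a (S v)))"
    by (intro bilinear_intoI linear_into_ad_left linear_into_ad linear_into_bracket_right
        linear_into_antipode linear_into_id)
  have "S (br a b) = sweedler b (\<lambda>u v. ad u (br a (S v)))"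
    by (rule trans[OF antipode_bracket bracket_swap])
  also have "\<dots> \<in> hopf_commutator scale \<Delta> S X Y"
  proof (rule sweedler_mem[OF subalgebra_commutator _ bil])
    show "coproduct_in Y b"
      using Y ab(2) by (simp add: normal_hopf_subalgebra_iff)
  next
    fix u v assume "v \<in> Y"
    with Y have "S v \<in> Y"
      by (simp add: normal_hopf_subalgebra_iff)
    with ab(1) show "ad u (br a (S v)) \<in> hopf_commutator scale \<Delta> S X Y"
      by (intro commutator_ad_closed[OF X Y] bracket_mem_commutator)
  qed
  finally show "S (br a b) \<in> hopf_commutator scale \<Delta> S X Y" .
qed

lemma commutator_coproduct_closed:
  assumes X: "normal_hopf_subalgebra scale \<Delta> S X" and Y: "normal_hopf_subalgebra scale \<Delta> S Y"
    and d: "d \<in> hopf_commutator scale \<Delta> S X Y"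
  shows "coproduct_in (hopf_commutator scale \<Delta> S X Y) d"
  using d
proof (rule hopf_commutator_induct)
  show "subalgebra scale
      {d \<in> hopf_commutator scale \<Delta> S X Y. coproduct_in (hopf_commutator scale \<Delta> S X Y) d}"
    by (rule subalgebra_coproduct_stable[OF subalgebra_commutator])
next
  fix a b assume "a \<in> X" "b \<in> Y"
  with X Y have "coproduct_in X a" "coproduct_in Y b"
    by (simp_all add: normal_hopf_subalgebra_iff)
  with linear_into_bracket_right[OF linear_into_id] linear_into_bracket_left[OF linear_into_id]
    sweedler_bracket[OF vector_space_field_self]
  show "coproduct_in (hopf_commutator scale \<Delta> S X Y) (br a b)"
    by (rule coproduct_in_comultiplicative) (auto intro: bracket_mem_commutator)
qed

end

theorem proposition4p2:
  fixes scale :: "'k::field \<Rightarrow> 'a::ring_1 \<Rightarrow> 'a"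
    and \<Delta> :: "'a \<Rightarrow> ('a \<times> 'a) list"
    and \<epsilon> :: "'a \<Rightarrow> 'k"
    and S :: "'a \<Rightarrow> 'a"
    and X Y :: "'a set"
  assumes "hopf_algebra scale \<Delta> \<epsilon> S"
    and "cocommutative scale \<Delta>"
    and "normal_hopf_subalgebra scale \<Delta> S X"
    and "normal_hopf_subalgebra scale \<Delta> S Y"
  shows "normal_hopf_subalgebra scale \<Delta> S (hopf_commutator scale \<Delta> S X Y)"
proof -
  interpret cocomm_hopf_alg scale \<Delta> \<epsilon> S
    using assms(1,2) by (intro cocomm_hopf_alg.intro hopf_alg.intro cocomm_hopf_alg_axioms.intro)
  show ?thesis
    unfolding normal_hopf_subalgebra_iff
    using subalgebra_commutator commutator_coproduct_closed[OF assms(3,4)]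
      commutator_antipode_closed[OF assms(3,4)] commutator_ad_closed[OF assms(3,4)]
    by blast
qed

end
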